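(* Let $p$ be a prime and let $d_1,\dots,d_l$ be integers with $1\le d_\lambda\le p$. Then for every integer $s$ with $1\le s\le p-1$, \[ \mathrm{sht}_V(s)\le\frac{(s-1)D_V}{p}. \]
   Context: Here $D_V:=\sum_{\lambda=1}^{l}\frac{(d_\lambda-1)d_\lambda}{2}$ and, for a positive integer $j$ with $p\nmid j$, $\mathrm{sht}_V(j):=\sum_{\lambda=1}^{l}\sum_{i=1}^{d_\lambda-1}\lfloor ij/p\rfloor$. *)

theory Defs
  imports Complex_Main "HOL-Computational_Algebra.Primes"
begin

definition D_V :: "nat list \<Rightarrow> nat" where
  "D_V ds = (\<Sum>k<length ds. ((ds ! k - 1) * ds ! k) div 2)"

definition sht_V :: "nat \<Rightarrow> nat list \<Rightarrow> nat \<Rightarrow> nat" where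
  "sht_V p ds j = (\<Sum>k<length ds. \<Sum>i\<in>{1..<ds ! k}. (i * j) div p)"

end

theory Submission
  imports Defs "HOL-Number_Theory.Cong"
begin

text \<open>Write \<open>i s = p \<lfloor>i s / p\<rfloor> + (i s mod p)\<close> for \<open>1 \<le> i < d\<close>. Since \<open>s\<close> is a unit
  modulo \<open>p\<close> and \<open>d \<le> p\<close>, the residues \<open>i s mod p\<close> are distinct and nonzero, so their
  sum is at least \<open>1 + \<dots> + (d - 1)\<close>. Hence \<open>p \<Sum>\<^sub>i \<lfloor>i s / p\<rfloor> \<le> (s - 1) \<Sum>\<^sub>i i\<close>, and
  summing over the blocks \<open>d\<^sub>\<lambda>\<close> gives the claim.\<close>

lemma sum_atLeast1_atMost_card_le_sum:
  fixes A :: "nat set"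
  assumes "finite A" and "0 \<notin> A"
  shows "\<Sum>{1..card A} \<le> \<Sum>A"
  using assms
proof (induction "card A" arbitrary: A)
  case 0
  then show ?case by simp
next
  case (Suc n)
  define m where "m = Max A"
  have "A \<noteq> {}" using Suc.hyps(2) by auto
  then have "m \<in> A" using Suc.prems(1) m_def by simp
  have "A \<subseteq> {1..m}" using Suc.prems m_def by (auto simp: Suc_le_eq intro!: gr0I)
  then have "Suc n \<le> m" using Suc.hyps(2) card_mono[of "{1..m}" A] by simp
  have "card (A - {m}) = n" using Suc.hyps(2) Suc.prems(1) \<open>m \<in> A\<close> by simp
  then have "\<Sum>{1..n} \<le> \<Sum>(A - {m})"
    using Suc.hyps(1)[of "A - {m}"] Suc.prems by simp
  moreover have "\<Sum>A = \<Sum>(A - {m}) + m"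
    using Suc.prems(1) \<open>m \<in> A\<close> by (simp add: sum.remove)
  ultimately show ?case using \<open>Suc n \<le> m\<close> Suc.hyps(2)[symmetric] by simp
qed

lemma sum_mod_multiples_ge:
  fixes p s d :: nat
  assumes "coprime s p" and "d \<le> p"
  shows "(\<Sum>i\<in>{1..<d}. i) \<le> (\<Sum>i\<in>{1..<d}. i * s mod p)"
proof -
  let ?r = "\<lambda>i. i * s mod p"
  have "inj_on ?r {1..<d}"
  proof (rule inj_onI)
    fix i j assume "i \<in> {1..<d}" "j \<in> {1..<d}" "?r i = ?r j"
    then have "[i = j] (mod p)"
      using assms(1) by (simp add: cong_def [symmetric] cong_mult_rcancel_nat)
    then show "i = j" using \<open>i \<in> {1..<d}\<close> \<open>j \<in> {1..<d}\<close> assms(2) by (simp add: cong_def)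
  qed
  moreover have "0 \<notin> ?r ` {1..<d}"
  proof
    assume "0 \<in> ?r ` {1..<d}"
    then obtain i where i: "i \<in> {1..<d}" "p dvd i * s" by auto
    then have "p dvd i" using assms(1) coprime_commute coprime_dvd_mult_left_iff by metis
    then show False using i assms(2) by (auto dest: dvd_imp_le)
  qed
  ultimately have "\<Sum>{1..card (?r ` {1..<d})} \<le> \<Sum>(?r ` {1..<d})"
    by (intro sum_atLeast1_atMost_card_le_sum) auto
  moreover have "{1..card (?r ` {1..<d})} = {1..<d}"
    using card_image[OF \<open>inj_on ?r {1..<d}\<close>] by auto
  ultimately show ?thesis using sum.reindex[OF \<open>inj_on ?r {1..<d}\<close>, of id] by simp
qed

lemma sum_div_multiples_le:
  fixes p s d :: nat
  assumes "coprime s p" and "d \<le> p"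
  shows "p * (\<Sum>i\<in>{1..<d}. i * s div p) \<le> (s - 1) * (\<Sum>i\<in>{1..<d}. i)"
proof -
  have "p * (\<Sum>i\<in>{1..<d}. i * s div p) + (\<Sum>i\<in>{1..<d}. i * s mod p) = s * (\<Sum>i\<in>{1..<d}. i)"
    by (simp add: sum_distrib_left sum.distrib [symmetric] mult.commute)
  then show ?thesis
    using sum_mod_multiples_ge[OF assms] by (simp add: diff_mult_distrib)
qed

theorem lemma3p3:
  fixes p :: nat and ds :: "nat list" and s :: nat
  assumes "prime p"
    and "\<forall>d\<in>set ds. 1 \<le> d \<and> d \<le> p"
    and "1 \<le> s" and "s \<le> p - 1"
  shows "real (sht_V p ds s) \<le> (real s - 1) * real (D_V ds) / real p"
proof -
  have "p > 0" using assms(1) prime_gt_0_nat by blast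
  have "\<not> p dvd s" using assms(3,4) \<open>p > 0\<close> by (auto dest: dvd_imp_le)
  then have "coprime s p"
    using assms(1) by (simp add: coprime_commute prime_imp_coprime_nat)
  have "p * sht_V p ds s = (\<Sum>k<length ds. p * (\<Sum>i\<in>{1..<ds ! k}. i * s div p))"
    unfolding sht_V_def by (simp add: sum_distrib_left)
  also have "\<dots> \<le> (\<Sum>k<length ds. (s - 1) * (\<Sum>i\<in>{1..<ds ! k}. i))"
    using assms(2) \<open>coprime s p\<close> by (intro sum_mono sum_div_multiples_le) auto
  also have "\<dots> = (s - 1) * D_V ds"
    unfolding D_V_def by (simp add: sum_distrib_left Sum_Ico_nat mult.commute)
  finally have "real p * real (sht_V p ds s) \<le> (real s - 1) * real (D_V ds)"
    using assms(3) by (metis of_nat_1 of_nat_diff of_nat_le_iff of_nat_mult)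
  then show ?thesis using \<open>p > 0\<close> by (simp add: field_simps)
qed

end
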